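(* $$\int_{0}^{1}\frac{\log(x)\,\log(\log x)\,\tanh^{-1}(x)}{x}\,dx=\frac18\Big(-7\zeta'(3)+\zeta(3)\big(-7+7\gamma-7i\pi-\log 2\big)\Big),$$ where $\gamma$ is Euler's constant and $\zeta$ the Riemann zeta function.
   Context: For $x\in(0,1)$, $\log(\log x)=\log|\log x|+i\pi$ (principal branch). *)

theory Defs
  imports "HOL-Analysis.Analysis"
begin

text \<open>Riemann zeta function on its half-plane of convergence Re s > 1,
  given by its defining Dirichlet series (sum over n >= 1 of n^(-s)).
  Only values/derivatives at s = 3 (interior of that half-plane) are used.\<close>
definition zeta :: "complex \<Rightarrow> complex" where
  "zeta s = (\<Sum>n. 1 / (of_nat (Suc n)) powr s)"

end

theory Submission
  imports Defs
begin

(* Substituting x = exp (-t) turns the integral into - \<integral>\<^sub>0\<^sup>\<infinity> t (ln t + i pi) artanh (exp (-t)) dt.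
   Expanding artanh (exp (-t)) = \<Sum>\<^sub>k exp (-(2k+1) t) / (2k+1) and using
   \<integral> t exp (-a t) = 1 / a^2 and \<integral> t ln t exp (-a t) = (1 - \<gamma> - ln a) / a^2 (the derivative at s = 2
   of \<integral> t^(s-1) exp (-a t) = \<Gamma>(s) / a^s), the integral becomes a sum over odd a of
   (1 - \<gamma> - ln a + i pi) / a^3; the interchange is justified since the k-th term has L1-norm
   O(1 / k^2). Removing the even terms from the Dirichlet series of \<zeta>(3) and -\<zeta>'(3) yields the
   factors 7/8 and the correction ln 2 / 8. *)

lemma has_integral_scale_Ioi:
  fixes f :: "real \<Rightarrow> 'a::euclidean_space"
  assumes f: "f absolutely_integrable_on {0<..}" and c: "c > 0"
  shows "((\<lambda>t. f (c * t)) has_integral integral {0<..} f /\<^sub>R c) {0<..}"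
proof -
  have img: "(\<lambda>t. c * t) ` {0<..} = {0<..}"
    using c by (auto simp: image_iff intro!: bexI[of _ "x / c" for x])
  have "(\<lambda>t. \<bar>c\<bar> *\<^sub>R f (c * t)) absolutely_integrable_on {0<..} \<and>
        integral {0<..} (\<lambda>t. \<bar>c\<bar> *\<^sub>R f (c * t)) = integral {0<..} f"
    using f c
    by (subst has_absolute_integral_change_of_variables_real[where h = "\<lambda>_. c"])
       (auto intro!: derivative_eq_intros inj_onI simp: img)
  then have ai: "(\<lambda>t. c *\<^sub>R f (c * t)) absolutely_integrable_on {0<..}"
    and I: "integral {0<..} (\<lambda>t. c *\<^sub>R f (c * t)) = integral {0<..} f"
    by (simp_all only: abs_of_pos[OF c])
  have "((\<lambda>t. c *\<^sub>R f (c * t)) has_integral integral {0<..} f) {0<..}"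
    using integrable_integral[OF set_lebesgue_integral_eq_integral(1)[OF ai]] by (simp only: I)
  then show ?thesis
    using c by (simp add: has_integral_cmul_iff')
qed

lemma has_integral_powr_exp:
  fixes s a :: real
  assumes s: "s > 0" and a: "a > 0"
  shows "((\<lambda>t. t powr (s - 1) * exp (-(a * t))) has_integral Gamma s / a powr s) {0<..}"
proof -
  have "((\<lambda>t. t powr (s - 1) / exp t) has_integral Gamma s) {0..}"
    using Gamma_integral_real[OF s] .
  then have Gamma: "((\<lambda>t. t powr (s - 1) * exp (-t)) has_integral Gamma s) {0<..}"
    by (subst has_integral_spike_set_eq[of _ "{0..}"])
       (auto simp: exp_minus field_simps intro: negligible_subset[of "{0}"])
  then have "(\<lambda>t. t powr (s - 1) * exp (-t)) absolutely_integrable_on {0<..}"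
    by (intro nonnegative_absolutely_integrable_1) (auto simp: has_integral_integrable)
  from has_integral_scale_Ioi[OF this a]
  have "((\<lambda>t. (a * t) powr (s - 1) * exp (-(a * t))) has_integral Gamma s / a) {0<..}"
    unfolding integral_unique[OF Gamma] by (simp add: divide_inverse mult.commute)
  then have "((\<lambda>t. a powr (s - 1) * (t powr (s - 1) * exp (-(a * t)))) has_integral Gamma s / a) {0<..}"
    by (rule has_integral_eq[rotated]) (use a in \<open>simp add: powr_mult\<close>)
  then have "((\<lambda>t. t powr (s - 1) * exp (-(a * t))) has_integral Gamma s / a / a powr (s - 1)) {0<..}"
    using has_integral_cmul_iff'[of "a powr (s - 1)" "\<lambda>t. t powr (s - 1) * exp (-(a * t))"] a
    by (simp add: divide_inverse mult.commute)
  then show ?thesis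
    using a by (simp add: powr_diff field_simps)
qed

lemma has_integral_power_exp:
  fixes a :: real
  assumes a: "a > 0"
  shows "((\<lambda>t. t ^ n * exp (-(a * t))) has_integral fact n / a ^ Suc n) {0<..}"
proof -
  have "((\<lambda>t. t powr (real (Suc n) - 1) * exp (-(a * t))) has_integral
          Gamma (real (Suc n)) / a powr real (Suc n)) {0<..}"
    by (rule has_integral_powr_exp[OF _ a]) simp
  moreover have "Gamma (real (Suc n)) = fact n"
    using Gamma_fact[of n, where 'a = real] by (simp add: add.commute)
  moreover have "a powr real (Suc n) = a ^ Suc n"
    by (rule powr_realpow[OF a])
  moreover have "real (Suc n) - 1 = real n"
    by simp
  ultimately have "((\<lambda>t. t powr real n * exp (-(a * t))) has_integral fact n / a ^ Suc n) {0<..}"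
    by (simp only:)
  then show ?thesis
    by (rule has_integral_eq[rotated]) (simp add: powr_realpow)
qed

lemma abs_powr_minus_one_le:
  fixes t h :: real
  assumes t: "t > 0" and h: "0 < h" "h \<le> 1"
  shows "\<bar>t powr h - 1\<bar> \<le> h * \<bar>ln t\<bar> * max 1 t"
proof -
  define u where "u = h * ln t"
  have tu: "t powr h = exp u"
    using t by (simp add: powr_def u_def mult.commute)
  show ?thesis
  proof (cases "t \<ge> 1")
    case True
    have "1 - exp (-u) \<le> u"
      using exp_ge_add_one_self[of "-u"] by linarith
    then have "(1 - exp (-u)) * exp u \<le> u * exp u"
      by (rule mult_right_mono) simp
    moreover have "(1 - exp (-u)) * exp u = exp u - 1"
      by (simp add: left_diff_distrib exp_minus_inverse mult.commute[of "exp (-u)"])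
    ultimately have "exp u - 1 \<le> u * exp u"
      by simp
    moreover have "exp u \<le> t"
      using powr_mono[of h 1 t] True h tu by simp
    moreover have "0 \<le> u"
      using True h by (simp add: u_def)
    ultimately have "exp u - 1 \<le> u * t"
      by (meson mult_left_mono order_trans)
    moreover have "1 \<le> exp u"
      using \<open>0 \<le> u\<close> by simp
    ultimately show ?thesis
      using True h by (simp add: tu u_def)
  next
    case False
    have "1 - exp u \<le> -u"
      using exp_ge_add_one_self[of u] by linarith
    moreover have "exp u \<le> 1"
      using False h t by (simp add: u_def mult_nonneg_nonpos)
    ultimately show ?thesis
      using False h t by (simp add: tu u_def abs_if)
  qed
qed

lemma mult_abs_ln_le:
  fixes t :: real
  assumes t: "t > 0"
  shows "t * \<bar>ln t\<bar> \<le> 1 + t\<^sup>2"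
proof (cases "t \<ge> 1")
  case True
  then have "t * \<bar>ln t\<bar> \<le> t * t"
    using ln_le_minus_one[OF t] t by (intro mult_left_mono) auto
  then show ?thesis
    by (simp add: power2_eq_square)
next
  case False
  have "t * \<bar>ln t\<bar> = t * ln (1 / t)"
    using False t by (simp add: ln_div)
  also have "\<dots> \<le> t * (1 / t - 1)"
    using ln_le_minus_one[of "1 / t"] t by (intro mult_left_mono) auto
  also have "\<dots> = 1 - t"
    using t by (simp add: field_simps)
  finally show ?thesis
    using zero_le_power2[of t] t by linarith
qed

lemma abs_mult_powr_diff_quotient_le:
  fixes t h :: real
  assumes t: "t > 0" and h: "0 < h" "h \<le> 1"
  shows "\<bar>t * ((t powr h - 1) / h)\<bar> \<le> 1 + t + t ^ 2 + t ^ 3"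
proof -
  have "\<bar>(t powr h - 1) / h\<bar> \<le> \<bar>ln t\<bar> * max 1 t"
    using abs_powr_minus_one_le[OF t h] h by (simp add: pos_divide_le_eq mult_ac)
  then have "t * \<bar>(t powr h - 1) / h\<bar> \<le> t * (\<bar>ln t\<bar> * max 1 t)"
    using t by (intro mult_left_mono) auto
  then have "\<bar>t * ((t powr h - 1) / h)\<bar> \<le> t * \<bar>ln t\<bar> * max 1 t"
    by (simp only: abs_mult abs_of_pos[OF t] mult.assoc)
  also have "\<dots> \<le> (1 + t\<^sup>2) * (1 + t)"
    using mult_abs_ln_le[OF t] t by (intro mult_mono) auto
  also have "\<dots> = 1 + t + t ^ 2 + t ^ 3"
    by (simp add: algebra_simps power2_eq_square power3_eq_cube)
  finally show ?thesis .
qed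

lemma has_real_derivative_Gamma_div_powr_at_2:
  fixes a :: real
  assumes a: "a > 0"
  shows "((\<lambda>s. Gamma s / a powr s) has_real_derivative (1 - euler_mascheroni - ln a) / a\<^sup>2) (at 2)"
proof -
  have "2 \<notin> (\<int>\<^sub>\<le>\<^sub>0 :: real set)"
    by (auto elim!: nonpos_Ints_cases)
  then have deriv: "((\<lambda>s. Gamma s * exp (-(s * ln a))) has_real_derivative
      Gamma 2 * Digamma 2 * exp (-(2 * ln a)) + Gamma 2 * (exp (-(2 * ln a)) * - ln a)) (at 2)"
    by (auto intro!: derivative_eq_intros)
  have "Gamma (2::real) = 1" and "Digamma (2::real) = 1 - euler_mascheroni"
    using Gamma_numeral[of "num.Bit0 num.One"] Digamma_plus1[of "1::real"] by (simp_all add: numeral_2_eq_2)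
  moreover have "exp (-(2 * ln a)) = 1 / a\<^sup>2"
    using a by (simp add: exp_minus exp_of_nat_mult[of 2, simplified] power2_eq_square divide_inverse)
  ultimately have "Gamma 2 * Digamma 2 * exp (-(2 * ln a)) + Gamma 2 * (exp (-(2 * ln a)) * - ln a)
      = (1 - euler_mascheroni - ln a) / a\<^sup>2"
    by (simp only:) (simp add: diff_divide_distrib)
  moreover have "(\<lambda>s. Gamma s * exp (-(s * ln a))) = (\<lambda>s. Gamma s / a powr s)"
    using a by (simp add: fun_eq_iff powr_def exp_minus divide_inverse mult.commute)
  ultimately show ?thesis
    using deriv by simp
qed

lemma powr_diff_quotient_tendsto:
  fixes t :: real
  assumes h: "filterlim h (at 0) F" and t: "t > 0"
  shows "((\<lambda>k. (t powr h k - 1) / h k) \<longlongrightarrow> ln t) F"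
proof -
  have "((\<lambda>u. exp (u * ln t)) has_real_derivative ln t) (at 0)"
    by (auto intro!: derivative_eq_intros)
  then have "((\<lambda>u. (exp ((0 + u) * ln t) - exp (0 * ln t)) / u) \<longlongrightarrow> ln t) (at 0)"
    by (simp only: DERIV_def)
  from filterlim_compose[OF this h] show ?thesis
    using t by (simp add: powr_def)
qed

lemma has_integral_mult_ln_exp:
  fixes a :: real
  assumes a: "a > 0"
  shows "((\<lambda>t. t * ln t * exp (-(a * t))) has_integral (1 - euler_mascheroni - ln a) / a\<^sup>2) {0<..}"
proof -
  \<comment> \<open>Differentiate \<open>\<integral> t powr (s - 1) * exp (-(a * t)) = Gamma s / a powr s\<close> in \<open>s\<close> at \<open>s = 2\<close>
    under the integral sign, along the difference quotients with step \<open>h k \<longrightarrow> 0\<close>.\<close>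
  define G where "G s = Gamma s / a powr s" for s :: real
  define h :: "nat \<Rightarrow> real" where "h k = 1 / (2 + real k)" for k
  have h: "0 < h k" "h k \<le> 1" for k
    by (auto simp: h_def field_simps)
  have "h \<longlonglongrightarrow> 0"
    unfolding h_def
    by (intro tendsto_divide_0[OF tendsto_const] filterlim_at_top_imp_at_infinity
        filterlim_tendsto_add_at_top[OF tendsto_const filterlim_real_sequentially])
  then have h_at: "filterlim h (at 0) sequentially"
    using h(1) by (intro filterlim_atI) (auto intro!: always_eventually simp: less_imp_neq[symmetric])
  define f where "f k t = t * ((t powr h k - 1) / h k) * exp (-(a * t))" for k t
  have f_integral: "(f k has_integral (G (2 + h k) - G 2) / h k) {0<..}" for k
  proof -
    have "((\<lambda>t. (t powr (2 + h k - 1) * exp (-(a * t)) - t powr (2 - 1) * exp (-(a * t))) / h k)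
           has_integral (G (2 + h k) - G 2) / h k) {0<..}"
      using h(1)[of k] unfolding G_def by (intro has_integral_divide has_integral_diff has_integral_powr_exp a) auto
    then show ?thesis
      by (rule has_integral_eq[rotated]) (auto simp: f_def powr_add field_simps)
  qed
  have f_bound: "norm (f k t) \<le> (1 + t + t ^ 2 + t ^ 3) * exp (-(a * t))" if "t \<in> {0<..}" for k t
    using mult_right_mono[OF abs_mult_powr_diff_quotient_le[OF _ h(1)[of k] h(2)[of k]], of t "exp (-(a * t))"] that
    by (simp add: f_def abs_mult)
  have "((\<lambda>t. t ^ 0 * exp (-(a * t)) + t ^ 1 * exp (-(a * t)) + t ^ 2 * exp (-(a * t))
           + t ^ 3 * exp (-(a * t))) has_integral
          fact 0 / a ^ Suc 0 + fact 1 / a ^ Suc 1 + fact 2 / a ^ Suc 2 + fact 3 / a ^ Suc 3) {0<..}"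
    by (intro has_integral_add has_integral_power_exp a)
  then have bound_integrable: "(\<lambda>t. (1 + t + t ^ 2 + t ^ 3) * exp (-(a * t))) integrable_on {0<..}"
    by (simp add: has_integral_integrable_integral algebra_simps)
  have f_lim: "(\<lambda>k. f k t) \<longlonglongrightarrow> t * ln t * exp (-(a * t))" if "t \<in> {0<..}" for t
    using powr_diff_quotient_tendsto[OF h_at, of t] that unfolding f_def by (intro tendsto_intros) auto
  have quotient_lim: "(\<lambda>k. (G (2 + h k) - G 2) / h k) \<longlonglongrightarrow> (1 - euler_mascheroni - ln a) / a\<^sup>2"
    using filterlim_compose[OF has_real_derivative_Gamma_div_powr_at_2[OF a, folded G_def, unfolded DERIV_def] h_at] .
  show ?thesis
    by (rule has_integral_dominated_convergence[OF f_integral bound_integrable _ _ quotient_lim])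
       (use f_bound f_lim in auto)
qed

lemma Ln_of_real_neg:
  assumes "t > 0"
  shows "Ln (- complex_of_real t) = of_real (ln t) + \<i> * pi"
  using Ln_of_real'[of "-t"] assms by (simp add: mult.commute)

lemma has_integral_mult_Ln_neg_exp:
  fixes a :: real
  assumes a: "a > 0"
  shows "((\<lambda>t. of_real t * Ln (- of_real t) * of_real (exp (-(a * t)))) has_integral
          (of_real (1 - euler_mascheroni - ln a) + \<i> * pi) / of_real (a\<^sup>2)) {0<..}"
proof -
  have parts: "((\<lambda>t. of_real (t * ln t * exp (-(a * t))) + \<i> * of_real (pi * (t ^ 1 * exp (-(a * t)))))
         has_integral of_real ((1 - euler_mascheroni - ln a) / a\<^sup>2) + \<i> * of_real (pi * (fact 1 / a ^ Suc 1))) {0<..}"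
    by (intro has_integral_add has_integral_mult_right has_integral_of_real has_integral_mult_ln_exp
        has_integral_power_exp a)
  have closed_form: "of_real ((1 - euler_mascheroni - ln a) / a\<^sup>2) + \<i> * of_real (pi * (fact 1 / a ^ Suc 1))
      = (of_real (1 - euler_mascheroni - ln a) + \<i> * pi) / complex_of_real (a\<^sup>2)"
    using a by (simp add: field_simps power2_eq_square)
  show ?thesis
    using parts unfolding closed_form by (rule has_integral_eq[rotated]) (simp add: Ln_of_real_neg ring_distribs mult_ac)
qed

lemma norm_mult_Ln_neg_le:
  assumes t: "t > 0"
  shows "norm (of_real t * Ln (- of_real t)) \<le> 1 + pi * t + t\<^sup>2"
proof -
  have "norm (of_real t * Ln (- of_real t)) = norm (of_real (t * ln t) + \<i> * of_real (pi * t))"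
    using t by (simp add: Ln_of_real_neg algebra_simps)
  also have "\<dots> \<le> t * \<bar>ln t\<bar> + pi * t"
    using norm_triangle_ineq[of "of_real (t * ln t)" "\<i> * of_real (pi * t)"] t
    by (simp add: abs_mult norm_mult)
  finally show ?thesis
    using mult_abs_ln_le[OF t] by simp
qed

lemma absolutely_integrable_suminf:
  fixes f :: "nat \<Rightarrow> 'a::euclidean_space \<Rightarrow> 'b::euclidean_space"
  assumes f: "\<And>k. f k absolutely_integrable_on S"
    and summable_norm: "\<And>x. x \<in> S \<Longrightarrow> summable (\<lambda>k. norm (f k x))"
    and sums: "\<And>x. x \<in> S \<Longrightarrow> (\<lambda>k. f k x) sums g x"
    and summable_integral_norm: "summable (\<lambda>k. integral S (\<lambda>x. norm (f k x)))"
  shows "g absolutely_integrable_on S"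
    and "(\<lambda>k. integral S (f k)) sums integral S g"
proof -
  define F where "F k x = indicator S x *\<^sub>R f k x" for k x
  have F_integrable: "integrable lebesgue (F k)" for k
    using f[of k] unfolding set_integrable_def F_def[abs_def] .
  have AE_summable: "AE x in lebesgue. summable (\<lambda>k. norm (F k x))"
    using summable_norm by (auto simp: F_def indicator_def)
  have summable: "summable (\<lambda>k. \<integral>x. norm (F k x) \<partial>lebesgue)"
  proof -
    have "(\<lambda>x. norm (F k x)) = (\<lambda>x. indicator S x *\<^sub>R norm (f k x))" for k
      by (auto simp: F_def indicator_def)
    then have "(\<integral>x. norm (F k x) \<partial>lebesgue) = integral S (\<lambda>x. norm (f k x))" for k
      using set_lebesgue_integral_eq_integral(2)[OF set_integrable_norm[OF f[of k]]]
      by (simp add: set_lebesgue_integral_def)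
    then show ?thesis
      using summable_integral_norm by simp
  qed
  have suminf_F: "(\<Sum>k. F k x) = indicator S x *\<^sub>R g x" for x
    using sums_unique[OF sums[of x]] by (auto simp: F_def indicator_def)
  have g: "integrable lebesgue (\<lambda>x. indicator S x *\<^sub>R g x)"
    and sums_F: "(\<lambda>k. integral\<^sup>L lebesgue (F k)) sums (\<integral>x. indicator S x *\<^sub>R g x \<partial>lebesgue)"
    using integrable_suminf[where f = F, OF F_integrable AE_summable summable]
      sums_integral[where f = F, OF F_integrable AE_summable summable]
    by (simp_all add: suminf_F)
  then show g_integrable: "g absolutely_integrable_on S"
    by (simp add: set_integrable_def)
  have "integral\<^sup>L lebesgue (F k) = integral S (f k)" for k
    using set_lebesgue_integral_eq_integral(2)[OF f[of k]]
    by (simp add: set_lebesgue_integral_def F_def[abs_def])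
  moreover have "(\<integral>x. indicator S x *\<^sub>R g x \<partial>lebesgue) = integral S g"
    using set_lebesgue_integral_eq_integral(2)[OF g_integrable]
    by (simp add: set_lebesgue_integral_def)
  ultimately show "(\<lambda>k. integral S (f k)) sums integral S g"
    using sums_F by simp
qed

lemma has_integral_exp_minus_substitution:
  fixes f :: "real \<Rightarrow> 'a::euclidean_space"
  assumes "(\<lambda>t. exp (-t) *\<^sub>R f (exp (-t))) absolutely_integrable_on {0<..}"
  shows "(f has_integral integral {0<..} (\<lambda>t. exp (-t) *\<^sub>R f (exp (-t)))) {0<..<1}"
proof -
  have image: "(\<lambda>t. exp (-t)) ` {0<..} = {0<..<1::real}"
  proof safe
    fix x :: real
    assume "x \<in> {0<..<1}"
    then show "x \<in> (\<lambda>t. exp (-t)) ` {0<..}"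
      by (intro image_eqI[of _ _ "-ln x"]) auto
  qed auto
  have deriv: "((\<lambda>t. exp (-t)) has_real_derivative - exp (-x)) (at x within {0<..})" for x :: real
    by (auto intro!: derivative_eq_intros)
  have inj: "inj_on (\<lambda>t::real. exp (-t)) {0<..}"
    by (auto intro: inj_onI)
  have "f absolutely_integrable_on {0<..<1} \<and>
        integral {0<..<1} f = integral {0<..} (\<lambda>t. exp (-t) *\<^sub>R f (exp (-t)))"
    using has_absolute_integral_change_of_variables_real[OF _ deriv inj, of f
        "integral {0<..} (\<lambda>t. exp (-t) *\<^sub>R f (exp (-t)))"] assms
    by (simp add: image)
  then show ?thesis
    using integrable_integral[OF set_lebesgue_integral_eq_integral(1)] by metis
qed

lemma sums_even_add_odd:
  fixes f :: "nat \<Rightarrow> 'a::{t2_space, topological_comm_monoid_add}"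
  assumes "summable f"
  shows "(\<lambda>k. f (2 * k) + f (2 * k + 1)) sums suminf f"
  using sums_group[OF summable_sums[OF assms], of 2] by (simp add: mult.commute)

lemma artanh_real_sums:
  fixes y :: real
  assumes y: "\<bar>y\<bar> < 1"
  shows "(\<lambda>k. y ^ (2 * k + 1) / real (2 * k + 1)) sums artanh y"
proof -
  define g where "g n = (y ^ n / real n - (-y) ^ n / real n) / 2" for n
  have "(\<lambda>n. (- ((-y) ^ n) / real n - - ((-(-y)) ^ n) / real n) / 2) sums
        ((ln (1 + y) - ln (1 + -y)) / 2)"
    using y by (intro sums_divide sums_diff ln_series') auto
  then have g_sums: "g sums artanh y"
    using y by (simp add: g_def[abs_def] artanh_def ln_div abs_less_iff diff_divide_distrib)
  have "g (2 * k) + g (2 * k + 1) = y ^ (2 * k + 1) / real (2 * k + 1)" for k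
  proof -
    have odd_power: "(-y) ^ (2 * k + 1) = - (y ^ (2 * k + 1))"
      by simp
    have "(u - u) / 2 + (v - - v) / 2 = v" for u v :: real
      by simp
    then show ?thesis
      unfolding g_def odd_power Power.power_minus_even divide_minus_left .
  qed
  then show ?thesis
    using sums_even_add_odd[OF sums_summable[OF g_sums]] sums_unique[OF g_sums] by simp
qed

lemma mult_artanh_exp_minus_sums:
  fixes t :: real and w :: complex
  assumes "t > 0"
  shows "(\<lambda>k. (1 / real (2 * k + 1)) *\<^sub>R (w * of_real (exp (-(real (2 * k + 1) * t)))))
           sums (w * of_real (artanh (exp (-t))))"
    and "summable (\<lambda>k. norm ((1 / real (2 * k + 1)) *\<^sub>R (w * of_real (exp (-(real (2 * k + 1) * t))))))"
proof -
  have artanh_sums: "(\<lambda>k. exp (-t) ^ (2 * k + 1) / real (2 * k + 1)) sums artanh (exp (-t))"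
    using assms by (intro artanh_real_sums) simp
  have term_eq: "(1 / real (2 * k + 1)) *\<^sub>R (w * of_real (exp (-(real (2 * k + 1) * t))))
      = w * of_real (exp (-t) ^ (2 * k + 1) / real (2 * k + 1))" for k
    using exp_of_nat_mult[of "2 * k + 1" "-t"] by (simp add: scaleR_conv_of_real)
  show "(\<lambda>k. (1 / real (2 * k + 1)) *\<^sub>R (w * of_real (exp (-(real (2 * k + 1) * t)))))
      sums (w * of_real (artanh (exp (-t))))"
    unfolding term_eq by (intro sums_mult sums_of_real artanh_sums)
  show "summable (\<lambda>k. norm ((1 / real (2 * k + 1)) *\<^sub>R (w * of_real (exp (-(real (2 * k + 1) * t))))))"
    using summable_mult[OF sums_summable[OF artanh_sums], of "norm w"]
    unfolding term_eq norm_mult norm_of_real by simp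
qed

lemma summable_inverse_Suc_power:
  assumes "k \<ge> 2"
  shows "summable (\<lambda>n. 1 / real (Suc n) ^ k)"
  using summable_Suc_iff[of "\<lambda>n. inverse (real n ^ k)"] inverse_power_summable[of k] assms
  by (simp add: inverse_eq_divide del: of_nat_Suc)

lemma mult_Ln_neg_exp_absolutely_integrable:
  fixes a :: real
  assumes a: "a > 0"
  shows "(\<lambda>t. of_real t * Ln (- of_real t) * of_real (exp (-(a * t)))) absolutely_integrable_on {0<..}"
    and "integral {0<..} (\<lambda>t. norm (of_real t * Ln (- of_real t) * of_real (exp (-(a * t)))))
           \<le> 1 / a + pi / a\<^sup>2 + 2 / a ^ 3"
proof -
  define b where "b t = (1 + pi * t + t\<^sup>2) * exp (-(a * t))" for t
  have "((\<lambda>t. t ^ 0 * exp (-(a * t)) + pi * (t ^ 1 * exp (-(a * t))) + t ^ 2 * exp (-(a * t)))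
      has_integral fact 0 / a ^ Suc 0 + pi * (fact 1 / a ^ Suc 1) + fact 2 / a ^ Suc 2) {0<..}"
    by (intro has_integral_add has_integral_mult_right has_integral_power_exp a)
  then have b_integral: "(b has_integral 1 / a + pi / a\<^sup>2 + 2 / a ^ 3) {0<..}"
    by (rule has_integral_eq_rhs[OF has_integral_eq[rotated]]) (simp_all add: b_def algebra_simps power2_eq_square)
  have bound: "norm (of_real t * Ln (- of_real t) * of_real (exp (-(a * t)))) \<le> b t" if "t \<in> {0<..}" for t
    using mult_right_mono[OF norm_mult_Ln_neg_le[of t], of "exp (-(a * t))"] that
    by (simp add: b_def norm_mult)
  show integrable: "(\<lambda>t. of_real t * Ln (- of_real t) * of_real (exp (-(a * t)))) absolutely_integrable_on {0<..}"
    using bound has_integral_integrable[OF has_integral_mult_Ln_neg_exp[OF a]] has_integral_integrable[OF b_integral]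
    by (intro absolutely_integrable_integrable_bound[where g = b])
  have "integral {0<..} (\<lambda>t. norm (of_real t * Ln (- of_real t) * of_real (exp (-(a * t))))) \<le> integral {0<..} b"
    using integrable bound has_integral_integrable[OF b_integral]
    by (intro integral_le) (auto simp: absolutely_integrable_on_def)
  then show "integral {0<..} (\<lambda>t. norm (of_real t * Ln (- of_real t) * of_real (exp (-(a * t)))))
           \<le> 1 / a + pi / a\<^sup>2 + 2 / a ^ 3"
    using integral_unique[OF b_integral] by simp
qed

lemma mult_Ln_neg_artanh_integral:
  shows "(\<lambda>t. of_real t * Ln (- of_real t) * of_real (artanh (exp (-t))))
           absolutely_integrable_on {0<..}"
    and "(\<lambda>k. (of_real (1 - euler_mascheroni - ln (real (2 * k + 1))) + \<i> * pi)
             / of_real (real (2 * k + 1) ^ 3))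
           sums integral {0<..} (\<lambda>t. of_real t * Ln (- of_real t) * of_real (artanh (exp (-t))))"
proof -
  define a where "a k = real (2 * k + 1)" for k
  have a: "1 \<le> a k" "real (Suc k) \<le> a k" for k
    by (simp_all add: a_def)
  have a_pos: "0 < a k" for k
    by (simp add: a_def)
  define f where "f k t = (1 / a k) *\<^sub>R (of_real t * Ln (- of_real t) * of_real (exp (-(a k * t))))" for k t
  note kernel = mult_Ln_neg_exp_absolutely_integrable[OF a_pos]
  have f_integrable: "f k absolutely_integrable_on {0<..}" for k
    unfolding f_def by (rule absolutely_integrable_scaleR_left[OF kernel(1)])
  have summable_integral_norm: "summable (\<lambda>k. integral {0<..} (\<lambda>t. norm (f k t)))"
  proof (rule summable_comparison_test'[OF summable_mult[OF summable_inverse_Suc_power[of 2]]])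
    fix k
    have nonneg: "0 \<le> integral {0<..} (\<lambda>t. norm (f k t))"
      using f_integrable[of k] by (intro integral_nonneg) (auto simp: absolutely_integrable_on_def)
    have "integral {0<..} (\<lambda>t. norm (f k t))
        = 1 / a k * integral {0<..} (\<lambda>t. norm (of_real t * Ln (- of_real t) * of_real (exp (-(a k * t)))))"
      using a_pos[of k] by (simp add: f_def)
    also have "\<dots> \<le> 1 / a k * (1 / a k + pi / (a k)\<^sup>2 + 2 / a k ^ 3)"
      using kernel(2)[of k] a_pos[of k] by (intro mult_left_mono) auto
    also have "\<dots> = (1 + pi / a k + 2 / (a k)\<^sup>2) * (1 / a k ^ 2)"
      using a_pos[of k] by (simp add: field_simps power2_eq_square power3_eq_cube)
    also have "\<dots> \<le> (3 + pi) * (1 / a k ^ 2)"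
    proof (rule mult_right_mono)
      have "pi / a k \<le> pi" and "2 / (a k)\<^sup>2 \<le> 2"
        using a(1)[of k] by (simp_all add: field_simps)
      then show "1 + pi / a k + 2 / (a k)\<^sup>2 \<le> 3 + pi"
        by linarith
    qed simp
    also have "\<dots> \<le> (3 + pi) * (1 / real (Suc k) ^ 2)"
      using a(2)[of k] pi_gt3 by (intro mult_left_mono divide_left_mono power_mono) (auto simp del: of_nat_Suc)
    finally show "norm (integral {0<..} (\<lambda>t. norm (f k t))) \<le> (3 + pi) * (1 / real (Suc k) ^ 2)"
      using nonneg by simp
  qed simp
  have f_sums: "(\<lambda>k. f k t) sums (of_real t * Ln (- of_real t) * of_real (artanh (exp (-t))))"
    and summable_norm_f: "summable (\<lambda>k. norm (f k t))" if "t \<in> {0<..}" for t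
    using mult_artanh_exp_minus_sums[of t "of_real t * Ln (- of_real t)"] that by (simp_all add: f_def a_def)
  note series = absolutely_integrable_suminf[OF f_integrable summable_norm_f f_sums summable_integral_norm]
  show "(\<lambda>t. of_real t * Ln (- of_real t) * of_real (artanh (exp (-t)))) absolutely_integrable_on {0<..}"
    by (rule series(1))
  have "integral {0<..} (f k) = (of_real (1 - euler_mascheroni - ln (a k)) + \<i> * pi) / of_real (a k ^ 3)" for k
    using a_pos[of k] unfolding f_def integral_cmul integral_unique[OF has_integral_mult_Ln_neg_exp[OF a_pos]]
    by (simp add: scaleR_conv_of_real power2_eq_square power3_eq_cube)
  then show "(\<lambda>k. (of_real (1 - euler_mascheroni - ln (real (2 * k + 1))) + \<i> * pi)
             / of_real (real (2 * k + 1) ^ 3))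
           sums integral {0<..} (\<lambda>t. of_real t * Ln (- of_real t) * of_real (artanh (exp (-t))))"
    using series(2) by (simp add: a_def)
qed

lemma zeta_conv_exp: "zeta s = (\<Sum>n. exp (- (s * of_real (ln (real (Suc n))))))"
proof -
  have "1 / of_nat (Suc n) powr s = exp (- (s * of_real (ln (real (Suc n)))))" for n
    by (simp add: powr_def exp_minus inverse_eq_divide mult.commute del: of_nat_Suc)
  then show ?thesis
    by (simp add: zeta_def)
qed

lemma exp_minus_3_ln: "exp (- (3 * of_real (ln (real (Suc n))))) = complex_of_real (1 / real (Suc n) ^ 3)"
proof -
  have "exp (- (3 * ln (real (Suc n)))) = 1 / real (Suc n) ^ 3"
    by (simp add: exp_minus exp_of_nat_mult[of 3, simplified] inverse_eq_divide del: of_nat_Suc)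
  moreover have "exp (- (3 * of_real (ln (real (Suc n))))) = complex_of_real (exp (- (3 * ln (real (Suc n)))))"
    by (simp only: exp_of_real[symmetric] of_real_minus of_real_mult of_real_numeral)
  ultimately show ?thesis
    by (simp only:)
qed

lemma summable_ln_over_cube: "summable (\<lambda>n. ln (real (Suc n)) / real (Suc n) ^ 3)"
proof (rule summable_comparison_test'[OF summable_inverse_Suc_power[of 2]])
  fix n :: nat
  have "ln (real (Suc n)) \<le> real (Suc n)"
    using ln_le_minus_one[of "real (Suc n)"] by simp
  then have "ln (real (Suc n)) / real (Suc n) ^ 3 \<le> real (Suc n) / real (Suc n) ^ 3"
    by (rule divide_right_mono) simp
  also have "\<dots> = 1 / real (Suc n) ^ 2"
    by (simp add: power2_eq_square power3_eq_cube del: of_nat_Suc)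
  finally show "norm (ln (real (Suc n)) / real (Suc n) ^ 3) \<le> 1 / real (Suc n) ^ 2"
    by simp
qed simp

lemma zeta_3: "zeta 3 = complex_of_real (\<Sum>n. 1 / real (Suc n) ^ 3)"
  unfolding zeta_conv_exp exp_minus_3_ln
  by (rule suminf_of_real[symmetric, OF summable_inverse_Suc_power]) simp

lemma norm_ln_mult_exp_le:
  fixes s :: complex
  assumes "s \<in> ball 3 (1/2)"
  shows "norm (of_real (ln (real (Suc n))) * exp (- (s * of_real (ln (real (Suc n))))))
           \<le> real (Suc n) powr (-3/2)"
proof -
  define L where "L = ln (real (Suc n))"
  have "Re s \<ge> 5/2"
    using assms abs_Re_le_cmod[of "3 - s"] by (simp add: dist_norm)
  moreover have L: "0 \<le> L" "L \<le> real (Suc n)"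
    using ln_le_minus_one[of "real (Suc n)"] by (simp_all add: L_def)
  ultimately have "5/2 * L \<le> Re s * L"
    by (intro mult_right_mono)
  then have "norm (of_real L * exp (- (s * of_real L))) \<le> real (Suc n) * exp (- (5/2 * L))"
    unfolding norm_mult norm_of_real norm_exp_eq_Re
    using L by (intro mult_mono) auto
  also have "\<dots> = exp (L + - (5/2 * L))"
    using exp_ln[of "real (Suc n)"] by (simp only: exp_add L_def)
  also have "\<dots> = real (Suc n) powr (-3/2)"
    by (simp add: powr_def L_def del: of_nat_Suc)
  finally show ?thesis
    by (simp only: L_def)
qed

lemma deriv_zeta_3: "deriv zeta 3 = - complex_of_real (\<Sum>n. ln (real (Suc n)) / real (Suc n) ^ 3)"
proof -
  define L where "L n = ln (real (Suc n))" for n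
  define f where "f n s = exp (- (s * of_real (L n)))" for n and s :: complex
  define f' where "f' n s = - of_real (L n) * exp (- (s * of_real (L n)))" for n and s :: complex
  have "(f n has_field_derivative f' n s) (at s within ball 3 (1/2))" for n s
    unfolding f_def f'_def by (auto intro!: derivative_eq_intros)
  moreover have "uniformly_convergent_on (ball 3 (1/2)) (\<lambda>n s. \<Sum>i<n. f' i s)"
  proof (rule Weierstrass_m_test')
    show "summable (\<lambda>n. real (Suc n) powr (-3/2))"
      using summable_Suc_iff[of "\<lambda>n. real n powr (-3/2)"] summable_real_powr_iff[of "-3/2"]
      by simp
  next
    fix n s
    assume "s \<in> ball (3::complex) (1/2)"
    then show "norm (f' n s) \<le> real (Suc n) powr (-3/2)"
      unfolding f'_def L_def mult_minus_left norm_minus_cancel by (rule norm_ln_mult_exp_le)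
  qed
  moreover have "summable (\<lambda>n. f n 3)"
    unfolding f_def L_def exp_minus_3_ln
    by (rule summable_of_real[OF summable_inverse_Suc_power]) simp
  ultimately have "((\<lambda>s. \<Sum>n. f n s) has_field_derivative (\<Sum>n. f' n 3)) (at 3)"
    by (intro has_field_derivative_series'(2)[of "ball 3 (1/2)"]) auto
  moreover have "(\<lambda>s. \<Sum>n. f n s) = zeta"
    by (simp add: fun_eq_iff f_def L_def zeta_conv_exp)
  ultimately have "deriv zeta 3 = (\<Sum>n. f' n 3)"
    by (simp add: DERIV_imp_deriv)
  also have "\<dots> = (\<Sum>n. complex_of_real (- (L n / real (Suc n) ^ 3)))"
    using exp_minus_3_ln by (simp add: f'_def L_def)
  also have "\<dots> = complex_of_real (\<Sum>n. - (L n / real (Suc n) ^ 3))"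
    by (rule suminf_of_real[symmetric, OF summable_minus]) (use summable_ln_over_cube in \<open>simp add: L_def\<close>)
  also have "\<dots> = - complex_of_real (\<Sum>n. ln (real (Suc n)) / real (Suc n) ^ 3)"
    using suminf_minus[OF summable_ln_over_cube] by (simp add: L_def)
  finally show ?thesis .
qed

lemma sums_even_terms:
  fixes f :: "nat \<Rightarrow> 'a::real_normed_vector"
  assumes "summable f" and "(\<lambda>k. f (2 * k + 1)) sums c"
  shows "(\<lambda>k. f (2 * k)) sums (suminf f - c)"
  using sums_diff[OF sums_even_add_odd[OF assms(1)] assms(2)] by simp

lemma real_Suc_odd: "real (Suc (2 * k + 1)) = 2 * real (Suc k)"
  by simp

lemma sums_odd_inverse_cube:
  "(\<lambda>k. 1 / real (2 * k + 1) ^ 3) sums (7/8 * (\<Sum>n. 1 / real (Suc n) ^ 3))"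
proof -
  define Z where "Z = (\<Sum>n. 1 / real (Suc n) ^ 3)"
  have "(\<lambda>k. 1/8 * (1 / real (Suc k) ^ 3)) sums (1/8 * Z)"
    unfolding Z_def by (intro sums_mult summable_sums summable_inverse_Suc_power) simp
  moreover have "1/8 * (1 / real (Suc k) ^ 3) = 1 / real (Suc (2 * k + 1)) ^ 3" for k
    unfolding real_Suc_odd power_mult_distrib by simp
  ultimately have "(\<lambda>k. 1 / real (Suc (2 * k + 1)) ^ 3) sums (1/8 * Z)"
    by simp
  from sums_even_terms[OF summable_inverse_Suc_power this]
  show ?thesis
    by (simp add: Z_def)
qed

lemma sums_odd_ln_over_cube:
  "(\<lambda>k. ln (real (2 * k + 1)) / real (2 * k + 1) ^ 3) sums
     (7/8 * (\<Sum>n. ln (real (Suc n)) / real (Suc n) ^ 3) - ln 2 / 8 * (\<Sum>n. 1 / real (Suc n) ^ 3))"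
proof -
  define Z where "Z = (\<Sum>n. 1 / real (Suc n) ^ 3)"
  define D where "D = (\<Sum>n. ln (real (Suc n)) / real (Suc n) ^ 3)"
  have "(\<lambda>k. ln 2 / 8 * (1 / real (Suc k) ^ 3) + 1/8 * (ln (real (Suc k)) / real (Suc k) ^ 3))
          sums (ln 2 / 8 * Z + 1/8 * D)"
    unfolding Z_def D_def
    by (intro sums_add sums_mult summable_sums summable_inverse_Suc_power summable_ln_over_cube) simp
  moreover have "ln 2 / 8 * (1 / real (Suc k) ^ 3) + 1/8 * (ln (real (Suc k)) / real (Suc k) ^ 3)
      = ln (real (Suc (2 * k + 1))) / real (Suc (2 * k + 1)) ^ 3" for k
    unfolding real_Suc_odd power_mult_distrib
    by (simp add: ln_mult field_simps del: of_nat_Suc)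
  ultimately have "(\<lambda>k. ln (real (Suc (2 * k + 1))) / real (Suc (2 * k + 1)) ^ 3) sums (ln 2 / 8 * Z + 1/8 * D)"
    by simp
  from sums_even_terms[OF summable_ln_over_cube this]
  show ?thesis
    by (simp add: Z_def D_def algebra_simps)
qed

lemma sums_odd_coefficients_zeta_3:
  "(\<lambda>k. (of_real (1 - euler_mascheroni - ln (real (2 * k + 1))) + \<i> * pi) / of_real (real (2 * k + 1) ^ 3))
     sums (7/8 * deriv zeta 3 + zeta 3 * (7/8 * (1 - euler_mascheroni + \<i> * pi) + of_real (ln 2) / 8))"
proof -
  have "(\<lambda>k. (1 - euler_mascheroni + \<i> * pi) * of_real (1 / real (2 * k + 1) ^ 3)
             - of_real (ln (real (2 * k + 1)) / real (2 * k + 1) ^ 3))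
      sums ((1 - euler_mascheroni + \<i> * pi) * of_real (7/8 * (\<Sum>n. 1 / real (Suc n) ^ 3))
             - of_real (7/8 * (\<Sum>n. ln (real (Suc n)) / real (Suc n) ^ 3)
                        - ln 2 / 8 * (\<Sum>n. 1 / real (Suc n) ^ 3)))"
    by (intro sums_diff sums_mult sums_of_real sums_odd_inverse_cube sums_odd_ln_over_cube)
  moreover have "(1 - euler_mascheroni + \<i> * pi) * of_real (1 / real (2 * k + 1) ^ 3)
             - of_real (ln (real (2 * k + 1)) / real (2 * k + 1) ^ 3)
      = (of_real (1 - euler_mascheroni - ln (real (2 * k + 1))) + \<i> * pi) / of_real (real (2 * k + 1) ^ 3)" for k
    using of_real_eq_0_iff[of "real (2 * k + 1) ^ 3", where 'a = complex]
    by (simp add: field_simps del: of_real_eq_0_iff)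
  moreover have "(1 - euler_mascheroni + \<i> * pi) * of_real (7/8 * (\<Sum>n. 1 / real (Suc n) ^ 3))
             - of_real (7/8 * (\<Sum>n. ln (real (Suc n)) / real (Suc n) ^ 3)
                        - ln 2 / 8 * (\<Sum>n. 1 / real (Suc n) ^ 3))
      = 7/8 * deriv zeta 3 + zeta 3 * (7/8 * (1 - euler_mascheroni + \<i> * pi) + of_real (ln 2) / 8)"
    unfolding zeta_3 deriv_zeta_3 by (simp add: algebra_simps)
  ultimately show ?thesis
    by simp
qed

theorem mainTheorem13:
  shows "((\<lambda>x::real. complex_of_real (ln x) * Ln (complex_of_real (ln x))
            * complex_of_real (artanh x) / complex_of_real x)
          has_integral
          (1/8) * (- 7 * deriv zeta 3
                   + zeta 3 * (- 7 + 7 * euler_mascheroni - 7 * \<i> * complex_of_real pi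
                               - complex_of_real (ln 2)))) {0<..<1}"
proof -
  define f where "f x = complex_of_real (ln x) * Ln (complex_of_real (ln x))
            * complex_of_real (artanh x) / complex_of_real x" for x
  define g where "g t = of_real t * Ln (- of_real t) * of_real (artanh (exp (-t)))" for t
  have substituted: "exp (-t) *\<^sub>R f (exp (-t)) = - g t" for t
    by (simp add: f_def g_def scaleR_conv_of_real)
  have g_integrable: "g absolutely_integrable_on {0<..}"
    using mult_Ln_neg_artanh_integral(1) unfolding g_def .
  have "(\<lambda>t. - g t) absolutely_integrable_on {0<..}"
    using absolutely_integrable_scaleR_left[OF g_integrable, of "-1"] by simp
  then have f_integral: "(f has_integral - integral {0<..} g) {0<..<1}"
    using has_integral_exp_minus_substitution[of f] unfolding substituted by simp
  have g_integral: "integral {0<..} g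
      = 7/8 * deriv zeta 3 + zeta 3 * (7/8 * (1 - euler_mascheroni + \<i> * pi) + of_real (ln 2) / 8)"
    using sums_unique2[OF mult_Ln_neg_artanh_integral(2) sums_odd_coefficients_zeta_3] unfolding g_def .
  have closed_form: "- (7/8 * deriv zeta 3 + zeta 3 * (7/8 * (1 - euler_mascheroni + \<i> * pi) + of_real (ln 2) / 8))
      = (1/8) * (- 7 * deriv zeta 3 + zeta 3 * (- 7 + 7 * euler_mascheroni - 7 * \<i> * complex_of_real pi
                                               - complex_of_real (ln 2)))"
    by (simp add: field_simps)
  show ?thesis
    using f_integral unfolding g_integral closed_form f_def[abs_def] .
qed

end
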